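(* Consider the production planning setting described in the context, in the non-overlapping case, with the continuous budgeted scenario set $\mathcal{U}^c$ (budget $\Gamma^c\ge 0$). Fix $\pmb{x}\in\mathbb{X}$ with $X_t=\sum_{i\in[t]}x_i$. Then the optimal value of the adversarial problem $\max_{\pmb{D}\in\mathcal{U}^c}\sum_{t\in[T]}\max\{f_I(X_t,D_t),f_B(X_t,D_t)\}$ equals the optimal value of $$\max\ \sum_{t\in[T]}\max\{f_I(X_t,\widehat{D}_t-\delta_t),\,f_B(X_t,\widehat{D}_t+\delta_t)\}\quad\text{s.t.}\quad\sum_{t\in[T]}\delta_t\le\Gamma^c,\ \ 0\le\delta_t\le\Delta_t\ (t\in[T]).$$
   Context: There are $T\ge 1$ periods, $[T]=\{1,\dots,T\}$. Given are a production cost $c^P$, an inventory cost $c^I$, a backordering cost $c^B$ and a selling price $b^P$ (independent of the period), and a set $\mathbb{X}\subseteq\mathbb{R}^T_+$ of feasible production plans $\pmb{x}=(x_1,\dots,x_T)$ described by finitely many linear constraints. For a plan write $X_t=\sum_{i\in[t]}x_i$. For $t\in[T-1]$ let $f_I(X_t,D_t)=c^I(X_t-D_t)$ and $f_B(X_t,D_t)=c^B(D_t-X_t)$; for $t=T$ let $f_I(X_T,D_T)=c^I(X_T-D_T)+c^PX_T-b^PD_T$ and $f_B(X_T,D_T)=c^B(D_T-X_T)+c^PX_T-b^PX_T$. Nominal cumulative demands $\widehat{D}_t\ge 0$ satisfy $\widehat{D}_t\le\widehat{D}_{t+1}$, and deviations satisfy $0\le\Delta_t\le\widehat{D}_t$.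 The continuous budgeted scenario set is $\mathcal{U}^c=\{\pmb{D}\in\mathbb{R}^T: D_t\le D_{t+1}\ (t\in[T-1]),\ D_t\in[\widehat{D}_t-\Delta_t,\widehat{D}_t+\Delta_t]\ (t\in[T]),\ \sum_{t\in[T]}|D_t-\widehat{D}_t|\le\Gamma^c\}$ with $\Gamma^c\in\mathbb{R}_+$. The non-overlapping case means $\widehat{D}_t+\Delta_t\le\widehat{D}_{t+1}-\Delta_{t+1}$ for all $t\in[T-1]$. *)

theory Defs
  imports Complex_Main
begin

text \<open>Periods are 1..T. Cost functions; the last period T additionally carries
  production cost and selling revenue.\<close>

definition f_I :: "real \<Rightarrow> real \<Rightarrow> real \<Rightarrow> nat \<Rightarrow> nat \<Rightarrow> real \<Rightarrow> real \<Rightarrow> real" where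
  "f_I cP cI bP T t X D =
     (if t = T then cI * (X - D) + cP * X - bP * D else cI * (X - D))"

definition f_B :: "real \<Rightarrow> real \<Rightarrow> real \<Rightarrow> nat \<Rightarrow> nat \<Rightarrow> real \<Rightarrow> real \<Rightarrow> real" where
  "f_B cP cB bP T t X D =
     (if t = T then cB * (D - X) + cP * X - bP * X else cB * (D - X))"

definition cumul :: "(nat \<Rightarrow> real) \<Rightarrow> nat \<Rightarrow> real" where
  "cumul x t = (\<Sum>i=1..t. x i)"

definition Uc :: "nat \<Rightarrow> (nat \<Rightarrow> real) \<Rightarrow> (nat \<Rightarrow> real) \<Rightarrow> real \<Rightarrow> (nat \<Rightarrow> real) set" where
  "Uc T Dhat Delta Gamma = {D.
     (\<forall>t\<in>{1..<T}. D t \<le> D (t+1)) \<and>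
     (\<forall>t\<in>{1..T}. Dhat t - Delta t \<le> D t \<and> D t \<le> Dhat t + Delta t) \<and>
     (\<Sum>t=1..T. \<bar>D t - Dhat t\<bar>) \<le> Gamma}"

definition Dev :: "nat \<Rightarrow> (nat \<Rightarrow> real) \<Rightarrow> real \<Rightarrow> (nat \<Rightarrow> real) set" where
  "Dev T Delta Gamma = {\<delta>.
     (\<Sum>t=1..T. \<delta> t) \<le> Gamma \<and> (\<forall>t\<in>{1..T}. 0 \<le> \<delta> t \<and> \<delta> t \<le> Delta t)}"

end

theory Submission
  imports Defs
begin

text \<open>In period t the cost is the maximum of an antitone function (inventory) and a monotone
  function (backorder) of the demand, so a scenario D is dominated by the deviation
  |D t - Dhat t| read on both sides of Dhat t. Conversely, given deviations, choosing in each period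
  the side with the larger cost yields a scenario; it is monotone because the non-overlapping
  intervals [Dhat t - Delta t, Dhat t + Delta t] are ordered.\<close>

lemma cSUP_eq_if_mutually_dominated:
  fixes g :: "'a \<Rightarrow> 'c::conditionally_complete_lattice" and h :: "'b \<Rightarrow> 'c"
  assumes "A \<noteq> {}" "B \<noteq> {}" "bdd_above (h ` B)"
    and g_le_h: "\<forall>a\<in>A. \<exists>b\<in>B. g a \<le> h b"
    and h_le_g: "\<forall>b\<in>B. \<exists>a\<in>A. h b \<le> g a"
  shows "(SUP a\<in>A. g a) = (SUP b\<in>B. h b)"
proof -
  have "bdd_above (g ` A)"
  proof -
    obtain M where "\<forall>b\<in>B. h b \<le> M" using \<open>bdd_above (h ` B)\<close> by (auto simp: bdd_above_def)
    then show ?thesis using g_le_h by (meson bdd_aboveI2 order_trans)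
  qed
  then show ?thesis
    using assms by (intro antisym cSUP_mono) auto
qed

lemma max_antimono_mono_le_deviation:
  fixes \<phi> \<psi> :: "real \<Rightarrow> real"
  assumes "antimono \<phi>" "mono \<psi>"
  shows "max (\<phi> d) (\<psi> d) \<le> max (\<phi> (c - \<bar>d - c\<bar>)) (\<psi> (c + \<bar>d - c\<bar>))"
proof (cases "d \<le> c")
  case True
  then have "\<psi> d \<le> \<psi> (c + \<bar>d - c\<bar>)" using \<open>mono \<psi>\<close> by (auto intro: monoD)
  with True show ?thesis by auto
next
  case False
  then have "\<phi> d \<le> \<phi> (c - \<bar>d - c\<bar>)" using \<open>antimono \<phi>\<close> by (auto intro: antimonoD)
  with False show ?thesis by auto
qed

lemma max_antimono_mono_deviation_mono:
  fixes \<phi> \<psi> :: "real \<Rightarrow> real"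
  assumes "antimono \<phi>" "mono \<psi>" "\<delta> \<le> \<delta>'"
  shows "max (\<phi> (c - \<delta>)) (\<psi> (c + \<delta>)) \<le> max (\<phi> (c - \<delta>')) (\<psi> (c + \<delta>'))"
  using assms antimonoD[of \<phi> "c - \<delta>'" "c - \<delta>"] monoD[of \<psi> "c + \<delta>" "c + \<delta>'"] by auto

lemma deviation_mem_Dev:
  assumes "D \<in> Uc T Dhat Delta Gamma"
  shows "(\<lambda>t. \<bar>D t - Dhat t\<bar>) \<in> Dev T Delta Gamma"
  using assms unfolding Uc_def Dev_def by auto

lemma zero_mem_Dev:
  assumes "Gamma \<ge> 0" "\<forall>t\<in>{1..T}. 0 \<le> Delta t"
  shows "(\<lambda>_. 0) \<in> Dev T Delta Gamma"
  using assms unfolding Dev_def by auto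

lemma mem_Uc_if_deviation_choice:
  assumes nonoverlap: "\<forall>t\<in>{1..<T}. Dhat t + Delta t \<le> Dhat (t+1) - Delta (t+1)"
    and \<delta>: "\<delta> \<in> Dev T Delta Gamma"
    and choice: "\<forall>t\<in>{1..T}. D t = Dhat t - \<delta> t \<or> D t = Dhat t + \<delta> t"
  shows "D \<in> Uc T Dhat Delta Gamma"
proof -
  have \<delta>_bounds: "0 \<le> \<delta> t \<and> \<delta> t \<le> Delta t" if "t \<in> {1..T}" for t
    using \<delta> that unfolding Dev_def by auto
  have D_bounds: "Dhat t - Delta t \<le> D t \<and> D t \<le> Dhat t + Delta t" if "t \<in> {1..T}" for t
    using choice \<delta>_bounds that by fastforce
  have "D t \<le> D (t+1)" if "t \<in> {1..<T}" for t
    using D_bounds[of t] D_bounds[of "t+1"] nonoverlap that by fastforce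
  moreover have "(\<Sum>t=1..T. \<bar>D t - Dhat t\<bar>) = (\<Sum>t=1..T. \<delta> t)"
    using choice \<delta>_bounds by (intro sum.cong) fastforce+
  ultimately show ?thesis
    using \<delta> D_bounds unfolding Uc_def Dev_def by auto
qed

theorem SUP_Uc_eq_SUP_Dev:
  fixes \<phi> \<psi> :: "nat \<Rightarrow> real \<Rightarrow> real"
  assumes \<phi>: "\<And>t. antimono (\<phi> t)" and \<psi>: "\<And>t. mono (\<psi> t)"
    and "Gamma \<ge> 0" "\<forall>t\<in>{1..T}. 0 \<le> Delta t"
    and nonoverlap: "\<forall>t\<in>{1..<T}. Dhat t + Delta t \<le> Dhat (t+1) - Delta (t+1)"
  shows "(SUP D\<in>Uc T Dhat Delta Gamma. \<Sum>t=1..T. max (\<phi> t (D t)) (\<psi> t (D t)))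
       = (SUP \<delta>\<in>Dev T Delta Gamma. \<Sum>t=1..T. max (\<phi> t (Dhat t - \<delta> t)) (\<psi> t (Dhat t + \<delta> t)))"
proof (rule cSUP_eq_if_mutually_dominated)
  let ?g = "\<lambda>D. \<Sum>t=1..T. max (\<phi> t (D t)) (\<psi> t (D t))"
  let ?h = "\<lambda>\<delta>. \<Sum>t=1..T. max (\<phi> t (Dhat t - \<delta> t)) (\<psi> t (Dhat t + \<delta> t))"
  have zero: "(\<lambda>_. 0) \<in> Dev T Delta Gamma"
    using zero_mem_Dev assms by blast
  then have "Dhat \<in> Uc T Dhat Delta Gamma"
    using mem_Uc_if_deviation_choice[OF nonoverlap] by auto
  then show "Uc T Dhat Delta Gamma \<noteq> {}" by blast
  show "Dev T Delta Gamma \<noteq> {}"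
    using zero by blast
  show "bdd_above (?h ` Dev T Delta Gamma)"
    by (rule bdd_aboveI2, rule sum_mono, rule max_antimono_mono_deviation_mono[OF \<phi> \<psi>])
      (auto simp: Dev_def)
  show "\<forall>D\<in>Uc T Dhat Delta Gamma. \<exists>\<delta>\<in>Dev T Delta Gamma. ?g D \<le> ?h \<delta>"
    using deviation_mem_Dev max_antimono_mono_le_deviation[OF \<phi> \<psi>] by (fast intro: sum_mono)
  show "\<forall>\<delta>\<in>Dev T Delta Gamma. \<exists>D\<in>Uc T Dhat Delta Gamma. ?h \<delta> \<le> ?g D"
  proof
    fix \<delta> assume \<delta>: "\<delta> \<in> Dev T Delta Gamma"
    define D where "D t = (if \<psi> t (Dhat t + \<delta> t) \<le> \<phi> t (Dhat t - \<delta> t)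
                          then Dhat t - \<delta> t else Dhat t + \<delta> t)" for t
    have "D \<in> Uc T Dhat Delta Gamma"
      using mem_Uc_if_deviation_choice[OF nonoverlap \<delta>] unfolding D_def by auto
    moreover have "?h \<delta> \<le> ?g D"
      by (rule sum_mono) (auto simp: D_def)
    ultimately show "\<exists>D\<in>Uc T Dhat Delta Gamma. ?h \<delta> \<le> ?g D" by blast
  qed
qed

lemma f_I_antimono:
  assumes "cI \<ge> 0" "bP \<ge> 0"
  shows "antimono (f_I cP cI bP T t X)"
proof (rule antimonoI)
  fix D1 D2 :: real assume "D1 \<le> D2"
  then have "cI * D1 \<le> cI * D2" "bP * D1 \<le> bP * D2"
    using assms by (auto intro: mult_left_mono)
  then show "f_I cP cI bP T t X D2 \<le> f_I cP cI bP T t X D1"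
    unfolding f_I_def by (auto simp: algebra_simps)
qed

lemma f_B_mono:
  assumes "cB \<ge> 0"
  shows "mono (f_B cP cB bP T t X)"
proof (rule monoI)
  fix D1 D2 :: real assume "D1 \<le> D2"
  then have "cB * D1 \<le> cB * D2"
    using assms by (auto intro: mult_left_mono)
  then show "f_B cP cB bP T t X D1 \<le> f_B cP cB bP T t X D2"
    unfolding f_B_def by (auto simp: algebra_simps)
qed

theorem lemma4:
  fixes T :: nat and cP cI cB bP Gamma :: real
    and x Dhat Delta :: "nat \<Rightarrow> real"
  assumes "T \<ge> 1"
    and "cP \<ge> 0" "cI \<ge> 0" "cB \<ge> 0" "bP \<ge> 0"
    and "Gamma \<ge> 0"
    and "\<forall>t\<in>{1..T}. x t \<ge> 0"
    and "\<forall>t\<in>{1..T}. Dhat t \<ge> 0"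
    and "\<forall>t\<in>{1..<T}. Dhat t \<le> Dhat (t+1)"
    and "\<forall>t\<in>{1..T}. 0 \<le> Delta t \<and> Delta t \<le> Dhat t"
    and "\<forall>t\<in>{1..<T}. Dhat t + Delta t \<le> Dhat (t+1) - Delta (t+1)"
  shows "(SUP D\<in>Uc T Dhat Delta Gamma.
            \<Sum>t=1..T. max (f_I cP cI bP T t (cumul x t) (D t))
                            (f_B cP cB bP T t (cumul x t) (D t)))
       = (SUP \<delta>\<in>Dev T Delta Gamma.
            \<Sum>t=1..T. max (f_I cP cI bP T t (cumul x t) (Dhat t - \<delta> t))
                            (f_B cP cB bP T t (cumul x t) (Dhat t + \<delta> t)))"
  using assms
  by (intro SUP_Uc_eq_SUP_Dev[where \<phi> = "\<lambda>t. f_I cP cI bP T t (cumul x t)"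
        and \<psi> = "\<lambda>t. f_B cP cB bP T t (cumul x t)"] f_I_antimono f_B_mono) auto

end
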